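(* Let $x\in(0,1)$ be irrational, and let $p^E_n/q^E_n$ ($n\ge1$) be the EICF convergents of $1-x$. Put $P_n=q^E_n-p^E_n$ and $Q_n=q^E_n$, so $P_n/Q_n=1-p^E_n/q^E_n$. For every $n\ge1$ such that $P_n$ and $Q_n$ are both odd, $P_n/Q_n$ is a best $1$-rational approximation of $x$, and hence is a principal convergent of the OOCF expansion of $x$.
   Context: Rationals are written $p/q$ with $p\in\mathbb Z$, $q\in\mathbb N$, $\gcd(p,q)=1$; $p/q$ is a $1$-rational if $p,q$ are both odd. For irrational $x$, a $1$-rational $p/q$ is a best $1$-rational approximation of $x$ if $|qx-p|<|bx-a|$ for every $1$-rational $a/b\ne p/q$ with $0<b\le q$. EICF: the map $T_E:[0,1]\to[0,1]$ is $T_E(y)=\frac1y-2k$ for $y\in[\frac1{2k+1},\frac1{2k}]$, $T_E(y)=2k-\frac1y$ for $y\in[\frac1{2k},\frac1{2k-1}]$ ($k\ge1$), $T_E(0)=0$. For irrational $y\in(0,1)$, its EICF digits are $(b_n,\eta_n)=(2k,1)$ if $T_E^{n-1}(y)\in[\frac1{2k+1},\frac1{2k}]$ and $(2k,-1)$ if $T_E^{n-1}(y)\in[\frac1{2k},\frac1{2k-1}]$, and its $n$-th EICF convergent is $p^E_n/q^E_n=\cfrac{1}{b_1+\cfrac{\eta_1}{b_2+\cfrac{\eta_2}{\ddots+\cfrac{\eta_{n-1}}{b_n}}}}$ in lowest terms with $q^E_n>0$. OOCF: digits $D=\{(1,1)\}\cup\{(a,\varepsilon):a\ge2,\ \varepsilon=\pm1\}$;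 $B(k+1,-1)=[\frac{k-1}{k},\frac{2k-1}{2k+1}]$, $B(k,1)=[\frac{2k-1}{2k+1},\frac{k}{k+1}]$ ($k\ge1$); $T(x)=\frac{kx-(k-1)}{k-(k+1)x}$ on $B(k+1,-1)$, $T(x)=\frac{k-(k+1)x}{kx-(k-1)}$ on $B(k,1)$, $T(1)=1$. The OOCF expansion of irrational $x\in(0,1)$ is the unique sequence $(a_n,\varepsilon_n)\in D$ with $T^{n-1}(x)\in B(a_n,\varepsilon_n)$ for all $n\ge1$; its $n$-th principal convergent is $1-\cfrac{1}{a_1+\cfrac{\varepsilon_1}{2-\cfrac{1}{\ddots\ \cfrac{\varepsilon_{n-1}}{2-\cfrac{1}{a_n+\varepsilon_n/2}}}}}$. *)

theory Defs
  imports Complex_Main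
begin

(* Sequences of digits are functions nat => int, indexed from 1 (the value at 0 is irrelevant). *)

(* For y in (0,1] with m = floor(1/y):
   m = 2k    : y in (1/(2k+1), 1/(2k)]   and T_E y = 1/y - 2k = 1/y - m
   m = 2k-1  : y in (1/(2k), 1/(2k-1)]   and T_E y = 2k - 1/y = m + 1 - 1/y
   This agrees with the paper's piecewise definition everywhere (the pieces agree
   at the shared endpoints). *)
definition TE :: "real \<Rightarrow> real" where
  "TE y = (if y = 0 then 0
           else if even \<lfloor>1 / y\<rfloor> then 1 / y - of_int \<lfloor>1 / y\<rfloor>
           else of_int \<lfloor>1 / y\<rfloor> + 1 - 1 / y)"

definition eicf_digit :: "real \<Rightarrow> int \<Rightarrow> int \<Rightarrow> bool" where
  "eicf_digit y bb ee \<longleftrightarrow> (\<exists>k::int. k \<ge> 1 \<and> bb = 2 * k \<and>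
      ((ee = 1 \<and> 1 / (2 * k + 1) \<le> y \<and> y \<le> 1 / (2 * k)) \<or>
       (ee = -1 \<and> 1 / (2 * k) \<le> y \<and> y \<le> 1 / (2 * k - 1))))"

definition is_eicf_expansion :: "real \<Rightarrow> (nat \<Rightarrow> int) \<Rightarrow> (nat \<Rightarrow> int) \<Rightarrow> bool" where
  "is_eicf_expansion y b eta \<longleftrightarrow>
     (\<forall>n\<ge>1. eicf_digit ((TE ^^ (n - 1)) y) (b n) (eta n))"

fun eicf_tail :: "(nat \<Rightarrow> int) \<Rightarrow> (nat \<Rightarrow> int) \<Rightarrow> nat \<Rightarrow> nat \<Rightarrow> rat" where
  "eicf_tail b eta 0 i = of_int (b i)"
| "eicf_tail b eta (Suc r) i = of_int (b i) + of_int (eta i) / eicf_tail b eta r (Suc i)"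

definition eicf_conv :: "(nat \<Rightarrow> int) \<Rightarrow> (nat \<Rightarrow> int) \<Rightarrow> nat \<Rightarrow> rat" where
  "eicf_conv b eta n = 1 / eicf_tail b eta (n - 1) 1"

definition eicf_pq :: "(nat \<Rightarrow> int) \<Rightarrow> (nat \<Rightarrow> int) \<Rightarrow> nat \<Rightarrow> int \<times> int" where
  "eicf_pq b eta n = quotient_of (eicf_conv b eta n)"

definition one_rational :: "int \<Rightarrow> int \<Rightarrow> bool" where
  "one_rational p q \<longleftrightarrow> q > 0 \<and> coprime p q \<and> odd p \<and> odd q"

definition best_1rat_approx :: "real \<Rightarrow> int \<Rightarrow> int \<Rightarrow> bool" where
  "best_1rat_approx x p q \<longleftrightarrow> one_rational p q \<and>
     (\<forall>a b. one_rational a b \<and> (a, b) \<noteq> (p, q) \<and> b \<le> q \<longrightarrow>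
        \<bar>of_int q * x - of_int p\<bar> < \<bar>of_int b * x - of_int a\<bar>)"

definition oocf_D :: "(int \<times> int) set" where
  "oocf_D = {(1, 1)} \<union> {(a, e). a \<ge> 2 \<and> (e = 1 \<or> e = -1)}"

definition oocf_B :: "int \<Rightarrow> int \<Rightarrow> real set" where
  "oocf_B a e = (if e = -1 then (let k = real_of_int (a - 1) in {(k - 1) / k .. (2 * k - 1) / (2 * k + 1)})
                 else (let k = real_of_int a in {(2 * k - 1) / (2 * k + 1) .. k / (k + 1)}))"

(* For x in [0,1), k = floor(1/(1-x)) is the k >= 1 with
   x in [(k-1)/k, k/(k+1)) = B(k+1,-1) \<union> B(k,1); the two formulas agree at the
   common endpoint (2k-1)/(2k+1) (value 1), and at the endpoints k/(k+1) (value 0),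
   so this is exactly the paper's T. *)
definition oocf_T :: "real \<Rightarrow> real" where
  "oocf_T x = (if x = 1 then 1
     else (let k = of_int \<lfloor>1 / (1 - x)\<rfloor> in
       if x \<le> (2 * k - 1) / (2 * k + 1) then (k * x - (k - 1)) / (k - (k + 1) * x)
       else (k - (k + 1) * x) / (k * x - (k - 1))))"

definition is_oocf_expansion :: "real \<Rightarrow> (nat \<Rightarrow> int) \<Rightarrow> (nat \<Rightarrow> int) \<Rightarrow> bool" where
  "is_oocf_expansion x a e \<longleftrightarrow>
     (\<forall>n\<ge>1. (a n, e n) \<in> oocf_D \<and> (oocf_T ^^ (n - 1)) x \<in> oocf_B (a n) (e n))"

fun oocf_tail :: "(nat \<Rightarrow> int) \<Rightarrow> (nat \<Rightarrow> int) \<Rightarrow> nat \<Rightarrow> nat \<Rightarrow> real" where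
  "oocf_tail a e 0 i = of_int (a i) + of_int (e i) / 2"
| "oocf_tail a e (Suc r) i = of_int (a i) + of_int (e i) / (2 - 1 / oocf_tail a e r (Suc i))"

definition oocf_conv :: "(nat \<Rightarrow> int) \<Rightarrow> (nat \<Rightarrow> int) \<Rightarrow> nat \<Rightarrow> real" where
  "oocf_conv a e n = 1 - 1 / oocf_tail a e (n - 1) 1"

end

theory Submission
  imports Defs
begin

text \<open>Put \<open>y = 1 - x\<close> and let \<open>p'/q'\<close>, \<open>p/q\<close> be consecutive EICF convergents of \<open>y\<close>.
  Then \<open>p' q - p q' = \<plusminus>1\<close> and \<open>q y - p = -\<eta> u (q' y - p')\<close> with \<open>0 < u < 1\<close>.
  A 1-rational \<open>a/b\<close> with \<open>b \<le> q\<close> gives the pair \<open>(b - a, b)\<close> with \<open>b - a\<close> even; when \<open>p\<close> is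
  even its coordinates \<open>(s, t)\<close> in the basis \<open>(p, q), (p', q')\<close> have \<open>s\<close> odd and \<open>t\<close> even, and a sign
  analysis gives \<open>|t - \<eta> s u| > u\<close>, i.e. \<open>a/b\<close> approximates \<open>x\<close> worse than \<open>(q - p)/q\<close>.

  For the OOCF, \<open>x\<close> is the image of \<open>T\<^sup>m x\<close> under a Moebius map whose value at \<open>1\<close> is the
  principal convergent \<open>R\<^sub>m/S\<^sub>m\<close>.  These are 1-rationals with increasing denominators, and
  two consecutive ones span a lattice of index 2 containing every pair of odd integers.  A similar sign
  analysis shows that no 1-rational with denominator below \<open>S\<^sub>m\<^sub>+\<^sub>1\<close> approximates \<open>x\<close>
  better than \<open>R\<^sub>m/S\<^sub>m\<close>; so a best 1-rational approximation with denominator \<open>q\<close>, where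
  \<open>S\<^sub>m \<le> q < S\<^sub>m\<^sub>+\<^sub>1\<close>, must be \<open>R\<^sub>m/S\<^sub>m\<close>.\<close>

lemma linear_frac_subst:
  fixes M :: "'a::field"
  assumes "M \<noteq> 0"
  shows "(P * (N / M) + Q) / (R * (N / M) + S) = (P * N + Q * M) / (R * N + S * M)"
proof -
  have "P * (N / M) + Q = (P * N + Q * M) / M" and "R * (N / M) + S = (R * N + S * M) / M"
    using assms by (simp_all add: field_simps)
  then show ?thesis
    using assms by simp
qed

lemma quotient_of_int_divide:
  assumes "Q > 0" and "coprime P Q"
  shows "quotient_of (of_int P / of_int Q) = (P, Q)"
  unfolding quotient_of_def
  by (rule the1_equality[OF quotient_of_unique]) (use assms in \<open>simp add: Fract_of_int_quotient\<close>)

lemma coprime_if_det_unit: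
  fixes A B C D :: int
  assumes "A * D - B * C = 1 \<or> A * D - B * C = -1"
  shows "coprime A C"
proof (rule coprimeI)
  fix c
  assume "c dvd A" and "c dvd C"
  then have "c dvd A * D - B * C"
    by simp
  then show "is_unit c"
    using assms by auto
qed

lemma unimodular_coords:
  fixes A B C D c d :: int
  assumes "A * D - B * C = 1 \<or> A * D - B * C = -1"
  obtains s t where "c = s * A + t * B" and "d = s * C + t * D"
proof -
  define \<delta> where "\<delta> = A * D - B * C"
  have "\<delta> * \<delta> = 1"
    using assms unfolding \<delta>_def by auto
  then have "c = (\<delta> * (c * D - B * d)) * A + (\<delta> * (A * d - c * C)) * B"
    and "d = (\<delta> * (c * D - B * d)) * C + (\<delta> * (A * d - c * C)) * D"
    unfolding \<delta>_def by algebra+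
  then show ?thesis
    by (rule that)
qed

lemma index_2_coords:
  fixes r s r' s' a b :: int
  assumes det: "r * s' - s * r' = 2 \<or> r * s' - s * r' = -2"
    and odd: "odd r" "odd s" "odd r'" "odd s'" "odd a" "odd b"
  obtains \<sigma> \<rho> where "a = \<sigma> * r + \<rho> * r'" and "b = \<sigma> * s + \<rho> * s'" and "odd (\<sigma> + \<rho>)"
proof -
  define d where "d = (r * s' - s * r') div 2"
  have det_d: "r * s' - s * r' = 2 * d" and "d * d = 1"
    using det unfolding d_def by auto
  have "even (a * s' - b * r')" "even (b * r - a * s)"
    using odd by simp_all
  then obtain \<sigma>' \<rho>' where \<sigma>': "a * s' - b * r' = 2 * \<sigma>'" and \<rho>': "b * r - a * s = 2 * \<rho>'"
    by (metis evenE)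
  have "2 * (\<sigma>' * r + \<rho>' * r') = a * (r * s' - s * r')" and "2 * (\<sigma>' * s + \<rho>' * s') = b * (r * s' - s * r')"
    using \<sigma>' \<rho>' by algebra+
  then have "\<sigma>' * r + \<rho>' * r' = a * d" and "\<sigma>' * s + \<rho>' * s' = b * d"
    unfolding det_d by simp_all
  then have a: "a = (d * \<sigma>') * r + (d * \<rho>') * r'" and b: "b = (d * \<sigma>') * s + (d * \<rho>') * s'"
    using \<open>d * d = 1\<close> by (metis (no_types, lifting) distrib_left mult.assoc mult.commute mult_1)+
  have "odd (d * \<sigma>' + d * \<rho>')"
  proof
    assume "even (d * \<sigma>' + d * \<rho>')"
    then have "even ((d * \<sigma>') * r + (d * \<rho>') * r')"
      using odd by (metis even_add even_mult_iff)
    then show False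
      using a odd by simp
  qed
  with a b show ?thesis
    by (rule that)
qed

lemma opposite_signs:
  fixes x y u v :: int
  assumes "0 < u" "0 < v" and "0 < x * u + y * v" "x * u + y * v < u + v" and "x \<noteq> 0" "y \<noteq> 0"
  shows "x > 0 \<and> y < 0 \<or> x < 0 \<and> y > 0"
proof -
  have "\<not> (x > 0 \<and> y > 0)"
  proof
    assume "x > 0 \<and> y > 0"
    then have "x * u \<ge> u" "y * v \<ge> v"
      using assms(1,2) by simp_all
    then show False
      using assms(4) by linarith
  qed
  moreover have "\<not> (x < 0 \<and> y < 0)"
  proof
    assume "x < 0 \<and> y < 0"
    then have "x * u < 0" "y * v < 0"
      using assms(1,2) by (auto simp: mult_neg_pos)
    then show False
      using assms(3) by linarith
  qed
  ultimately show ?thesis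
    using assms(5,6) by linarith
qed

definition moebius :: "int \<Rightarrow> int \<Rightarrow> int \<Rightarrow> int \<Rightarrow> real \<Rightarrow> real" where
  "moebius A B C D u = (of_int A * u + of_int B) / (of_int C * u + of_int D)"

lemma moebius_moebius:
  assumes "of_int C' * u + of_int D' \<noteq> (0::real)"
  shows "moebius A B C D (moebius A' B' C' D' u) =
         moebius (A * A' + B * C') (A * B' + B * D') (C * A' + D * C') (C * B' + D * D') u"
  unfolding moebius_def linear_frac_subst[OF assms] by (simp add: algebra_simps)

lemma moebius_remainders:
  fixes A B C D k :: int and t x :: real
  assumes x: "x = moebius A B C D t" and den: "of_int C * t + of_int D \<noteq> 0"
  shows "of_int (C + D) * x - of_int (A + B) = (1 - t) * (of_int C * x - of_int A)"
    and "of_int ((k - 2) * C + k * D) * x - of_int ((k - 2) * A + k * B) =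
         (of_int (k - 2) - of_int k * t) * (of_int C * x - of_int A)"
proof -
  have "x * (of_int C * t + of_int D) = of_int A * t + of_int B"
    using x den unfolding moebius_def by simp
  then have D: "of_int D * x - of_int B = - t * (of_int C * x - of_int A)"
    by (simp add: algebra_simps)
  have "of_int (C + D) * x - of_int (A + B) = (of_int C * x - of_int A) + (of_int D * x - of_int B)"
    by (simp add: algebra_simps)
  then show "of_int (C + D) * x - of_int (A + B) = (1 - t) * (of_int C * x - of_int A)"
    unfolding D by (simp add: algebra_simps)
  have "of_int ((k - 2) * C + k * D) * x - of_int ((k - 2) * A + k * B) =
        of_int (k - 2) * (of_int C * x - of_int A) + of_int k * (of_int D * x - of_int B)"
    by (simp add: algebra_simps)
  then show "of_int ((k - 2) * C + k * D) * x - of_int ((k - 2) * A + k * B) =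
             (of_int (k - 2) - of_int k * t) * (of_int C * x - of_int A)"
    unfolding D by (simp add: algebra_simps)
qed

section \<open>EICF convergents\<close>

fun eicf_num :: "(nat \<Rightarrow> int) \<Rightarrow> (nat \<Rightarrow> int) \<Rightarrow> nat \<Rightarrow> int" where
  "eicf_num b eta 0 = 0"
| "eicf_num b eta (Suc 0) = 1"
| "eicf_num b eta (Suc (Suc n)) = b (Suc (Suc n)) * eicf_num b eta (Suc n) + eta (Suc n) * eicf_num b eta n"

fun eicf_den :: "(nat \<Rightarrow> int) \<Rightarrow> (nat \<Rightarrow> int) \<Rightarrow> nat \<Rightarrow> int" where
  "eicf_den b eta 0 = 1"
| "eicf_den b eta (Suc 0) = b 1"
| "eicf_den b eta (Suc (Suc n)) = b (Suc (Suc n)) * eicf_den b eta (Suc n) + eta (Suc n) * eicf_den b eta n"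

fun eicf_comp :: "(nat \<Rightarrow> int) \<Rightarrow> (nat \<Rightarrow> int) \<Rightarrow> nat \<Rightarrow> nat \<Rightarrow> rat \<Rightarrow> rat" where
  "eicf_comp b eta i 0 u = 1 / (of_int (b i) + of_int (eta i) * u)"
| "eicf_comp b eta i (Suc r) u = 1 / (of_int (b i) + of_int (eta i) * eicf_comp b eta (Suc i) r u)"

lemma inverse_eicf_tail: "1 / eicf_tail b eta r i = eicf_comp b eta i r 0"
proof (induction r arbitrary: i)
  case 0
  then show ?case by simp
next
  case (Suc r)
  have "1 / eicf_tail b eta (Suc r) i =
        1 / (of_int (b i) + of_int (eta i) * (1 / eicf_tail b eta r (Suc i)))"
    by (simp add: divide_inverse)
  then show ?case
    using Suc.IH by simp
qed

lemma eicf_comp_Suc_inner: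
  "eicf_comp b eta i (Suc r) u =
   eicf_comp b eta i r (1 / (of_int (b (i + r + 1)) + of_int (eta (i + r + 1)) * u))"
  by (induction r arbitrary: i) simp_all

locale eicf_digits =
  fixes b eta :: "nat \<Rightarrow> int"
  assumes digit_ge_2: "\<And>k. k \<ge> 1 \<Longrightarrow> b k \<ge> 2"
    and sign_pm1: "\<And>k. k \<ge> 1 \<Longrightarrow> eta k = 1 \<or> eta k = -1"
begin

lemma eicf_den_increasing: "eicf_den b eta n \<ge> 1 \<and> eicf_den b eta (Suc n) \<ge> eicf_den b eta n + 1"
proof (induction n)
  case 0
  then show ?case using digit_ge_2[of 1] by simp
next
  case (Suc n)
  have "b (Suc (Suc n)) * eicf_den b eta (Suc n) \<ge> 2 * eicf_den b eta (Suc n)"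
    using digit_ge_2[of "Suc (Suc n)"] Suc.IH by (intro mult_right_mono) auto
  moreover have "eta (Suc n) * eicf_den b eta n \<ge> - eicf_den b eta n"
    using sign_pm1[of "Suc n"] Suc.IH by auto
  ultimately show ?case
    using Suc.IH by (simp only: eicf_den.simps) linarith
qed

lemma eicf_det:
  "eicf_num b eta n * eicf_den b eta (Suc n) - eicf_num b eta (Suc n) * eicf_den b eta n = 1 \<or>
   eicf_num b eta n * eicf_den b eta (Suc n) - eicf_num b eta (Suc n) * eicf_den b eta n = -1"
proof (induction n)
  case 0
  then show ?case by simp
next
  case (Suc n)
  have "eicf_num b eta (Suc n) * eicf_den b eta (Suc (Suc n)) - eicf_num b eta (Suc (Suc n)) * eicf_den b eta (Suc n)
     = - eta (Suc n) * (eicf_num b eta n * eicf_den b eta (Suc n) - eicf_num b eta (Suc n) * eicf_den b eta n)"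
    by (simp add: algebra_simps)
  then show ?case
    using Suc.IH sign_pm1[of "Suc n"] by auto
qed

lemma coprime_eicf_num_den: "coprime (eicf_num b eta n) (eicf_den b eta n)"
  using eicf_det by (rule coprime_if_det_unit)

lemma eicf_comp_eq:
  assumes "0 \<le> u" and "u \<le> 1"
  shows "eicf_comp b eta 1 m u =
   (of_int (eta (Suc m)) * of_int (eicf_num b eta m) * u + of_int (eicf_num b eta (Suc m))) /
   (of_int (eta (Suc m)) * of_int (eicf_den b eta m) * u + of_int (eicf_den b eta (Suc m)))"
  using assms
proof (induction m arbitrary: u)
  case 0
  then show ?case by (simp add: add.commute)
next
  case (Suc m)
  define W where "W = of_int (b (Suc (Suc m))) + of_int (eta (Suc (Suc m))) * u"
  have "of_int (eta (Suc (Suc m))) * u \<ge> -1"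
    using sign_pm1[of "Suc (Suc m)"] Suc.prems by auto
  moreover have "(of_int (b (Suc (Suc m))) :: rat) \<ge> 2"
    using digit_ge_2[of "Suc (Suc m)"] by simp
  ultimately have W: "W \<ge> 1"
    unfolding W_def by linarith
  have "eicf_comp b eta 1 (Suc m) u = eicf_comp b eta 1 m (1 / W)"
    using eicf_comp_Suc_inner[of b eta 1 m u] by (simp add: W_def)
  also have "\<dots> = (of_int (eta (Suc m)) * of_int (eicf_num b eta m) * (1 / W) + of_int (eicf_num b eta (Suc m))) /
                   (of_int (eta (Suc m)) * of_int (eicf_den b eta m) * (1 / W) + of_int (eicf_den b eta (Suc m)))"
    using W by (intro Suc.IH) auto
  also have "\<dots> = (of_int (eta (Suc m)) * of_int (eicf_num b eta m) + of_int (eicf_num b eta (Suc m)) * W) /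
                   (of_int (eta (Suc m)) * of_int (eicf_den b eta m) + of_int (eicf_den b eta (Suc m)) * W)"
    using W linear_frac_subst[of W _ 1] by simp
  finally show ?case
    unfolding W_def by (simp add: algebra_simps)
qed

lemma eicf_conv_eq:
  assumes "n \<ge> 1"
  shows "eicf_conv b eta n = of_int (eicf_num b eta n) / of_int (eicf_den b eta n)"
proof -
  obtain m where n: "n = Suc m"
    using assms by (cases n) auto
  have "eicf_conv b eta n = eicf_comp b eta 1 m 0"
    unfolding eicf_conv_def n inverse_eicf_tail by simp
  also have "\<dots> = of_int (eicf_num b eta n) / of_int (eicf_den b eta n)"
    using eicf_comp_eq[of 0 m] by (simp add: n)
  finally show ?thesis .
qed

lemma eicf_pq_eq:
  assumes "n \<ge> 1"
  shows "eicf_pq b eta n = (eicf_num b eta n, eicf_den b eta n)"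
  unfolding eicf_pq_def eicf_conv_eq[OF assms]
  using eicf_den_increasing[of n] coprime_eicf_num_den by (intro quotient_of_int_divide) auto

text \<open>Here \<open>ys m\<close> stands for \<open>T\<^sub>E\<^sup>m y\<close>, where \<open>y = ys 0\<close>.\<close>

lemma eicf_remainder_Suc:
  fixes ys :: "nat \<Rightarrow> real"
  assumes step: "\<And>m. 1 / ys m = of_int (b (Suc m)) + of_int (eta (Suc m)) * ys (Suc m)"
    and nonzero: "\<And>m. ys m \<noteq> 0"
  shows "of_int (eicf_den b eta (Suc m)) * ys 0 - of_int (eicf_num b eta (Suc m)) =
         - of_int (eta (Suc m)) * ys (Suc m) * (of_int (eicf_den b eta m) * ys 0 - of_int (eicf_num b eta m))"
proof (induction m)
  case 0
  have "1 = ys 0 * (of_int (b 1) + of_int (eta 1) * ys 1)"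
    using step[of 0] nonzero[of 0] by (simp add: field_simps)
  then show ?case by (simp add: algebra_simps)
next
  case (Suc m)
  define D where "D k = of_int (eicf_den b eta k) * ys 0 - of_int (eicf_num b eta k)" for k
  have "of_int (eta (Suc m)) * of_int (eta (Suc m)) = (1::real)"
    using sign_pm1[of "Suc m"] by auto
  then have D_m: "of_int (eta (Suc m)) * D m = - D (Suc m) / ys (Suc m)"
    using Suc.IH nonzero[of "Suc m"] unfolding D_def by (simp add: field_simps)
  have "D (Suc (Suc m)) = of_int (b (Suc (Suc m))) * D (Suc m) + of_int (eta (Suc m)) * D m"
    unfolding D_def by (simp add: algebra_simps)
  also have "\<dots> = D (Suc m) * (of_int (b (Suc (Suc m))) - 1 / ys (Suc m))"
    unfolding D_m by (simp add: algebra_simps)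
  also have "\<dots> = - of_int (eta (Suc (Suc m))) * ys (Suc (Suc m)) * D (Suc m)"
    using step[of "Suc m"] by simp
  finally show ?case
    unfolding D_def .
qed

end

lemma eicf_digit_TE:
  assumes irrational: "y \<notin> \<rat>" and digit: "eicf_digit y bb ee"
  shows "1 / y = of_int bb + of_int ee * TE y" and "0 < TE y" and "TE y < 1" and "TE y \<notin> \<rat>"
    and "bb \<ge> 2" and "ee = 1 \<or> ee = -1"
proof -
  obtain k :: int where k: "k \<ge> 1" "bb = 2 * k" and
    cases: "(ee = 1 \<and> 1 / (2 * k + 1) \<le> y \<and> y \<le> 1 / (2 * k)) \<or>
            (ee = -1 \<and> 1 / (2 * k) \<le> y \<and> y \<le> 1 / (2 * k - 1))"
    using digit unfolding eicf_digit_def by auto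
  have inv_irr: "1 / y \<notin> \<rat>"
    using irrational by (simp add: divide_inverse)
  then have not_int: "1 / y \<noteq> of_int j" for j
    by (metis Rats_of_int)
  have "y \<noteq> 0"
    using irrational by auto
  have step: "1 / y = of_int bb + of_int ee * TE y \<and> 0 < TE y \<and> TE y < 1 \<and> (ee = 1 \<or> ee = -1)"
  proof (cases "ee = 1")
    case True
    then have y: "1 / (2 * k + 1) \<le> y" "y \<le> 1 / (2 * k)"
      using cases by auto
    have "y > 0"
      using y(1) k by (smt (verit) divide_pos_pos of_int_pos)
    then have "2 * k \<le> 1 / y" "1 / y \<le> 2 * k + 1"
      using y k by (simp_all add: field_simps)
    then have lo: "2 * k < 1 / y" and hi: "1 / y < 2 * k + 1"
      using not_int[of "2 * k"] not_int[of "2 * k + 1"] by (simp_all add: order_le_less)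
    then have "\<lfloor>1 / y\<rfloor> = 2 * k"
      by (simp add: floor_eq_iff)
    then have "TE y = 1 / y - 2 * k"
      unfolding TE_def using \<open>y \<noteq> 0\<close> by simp
    then show ?thesis
      using lo hi k True by auto
  next
    case False
    then have ee: "ee = -1" and y: "1 / (2 * k) \<le> y" "y \<le> 1 / (2 * k - 1)"
      using cases by auto
    have "y > 0"
      using y(1) k by (smt (verit) divide_pos_pos of_int_pos)
    then have "2 * k - 1 \<le> 1 / y" "1 / y \<le> 2 * k"
      using y k by (simp_all add: field_simps)
    then have lo: "2 * k - 1 < 1 / y" and hi: "1 / y < 2 * k"
      using not_int[of "2 * k - 1"] not_int[of "2 * k"] by (simp_all add: order_le_less)
    then have "\<lfloor>1 / y\<rfloor> = 2 * k - 1"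
      by (simp add: floor_eq_iff)
    then have "TE y = 2 * k - 1 / y"
      unfolding TE_def using \<open>y \<noteq> 0\<close> by simp
    then show ?thesis
      using lo hi k ee by auto
  qed
  then show "1 / y = of_int bb + of_int ee * TE y" "0 < TE y" "TE y < 1" "ee = 1 \<or> ee = -1"
    by simp_all
  show "TE y \<notin> \<rat>"
  proof
    assume "TE y \<in> \<rat>"
    then have "of_int bb + of_int ee * TE y \<in> \<rat>"
      by simp
    then show False
      using inv_irr step by simp
  qed
  show "bb \<ge> 2"
    using k by simp
qed

lemma eicf_expansion_orbit:
  assumes irrational: "y \<notin> \<rat>" and expansion: "is_eicf_expansion y b eta"
  shows "(TE ^^ k) y \<notin> \<rat>"
    and "1 / (TE ^^ k) y = of_int (b (Suc k)) + of_int (eta (Suc k)) * (TE ^^ Suc k) y"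
    and "0 < (TE ^^ Suc k) y" and "(TE ^^ Suc k) y < 1"
    and "b (Suc k) \<ge> 2" and "eta (Suc k) = 1 \<or> eta (Suc k) = -1"
proof -
  have digit: "eicf_digit ((TE ^^ k) y) (b (Suc k)) (eta (Suc k))" for k
    using expansion unfolding is_eicf_expansion_def by (metis diff_Suc_1 le_add1 plus_1_eq_Suc)
  show irr: "(TE ^^ k) y \<notin> \<rat>" for k
    by (induction k) (use irrational eicf_digit_TE(4)[OF _ digit] in auto)
  show "1 / (TE ^^ k) y = of_int (b (Suc k)) + of_int (eta (Suc k)) * (TE ^^ Suc k) y"
    "0 < (TE ^^ Suc k) y" "(TE ^^ Suc k) y < 1" "b (Suc k) \<ge> 2" "eta (Suc k) = 1 \<or> eta (Suc k) = -1"
    using eicf_digit_TE[OF irr digit] by simp_all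
qed

lemma eicf_expansion_digits:
  assumes "y \<notin> \<rat>" and "is_eicf_expansion y b eta"
  shows "eicf_digits b eta"
proof
  fix k :: nat
  assume "k \<ge> 1"
  then obtain j where "k = Suc j"
    by (cases k) auto
  then show "b k \<ge> 2" and "eta k = 1 \<or> eta k = -1"
    using eicf_expansion_orbit(5,6)[OF assms, of j] by simp_all
qed

section \<open>Complements of EICF convergents are best 1-rational approximations\<close>

lemma eicf_coefficient_bound_pos_neg:
  fixes s t q q' \<eta> :: int and u :: real
  assumes st: "s > 0" "t < 0" and parity: "odd s" "even t" and range: "s * q + t * q' \<le> q"
    and q': "1 \<le> q'" "q' < q" and u: "0 < u" "u < 1" and \<eta>: "\<eta> = 1 \<or> \<eta> = -1"
  shows "u < \<bar>t - \<eta> * s * u\<bar>"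
proof (cases "\<eta> = 1")
  case True
  have "t \<le> -2"
    using st parity(2) by (auto elim!: evenE)
  moreover have "t - \<eta> * s * u \<le> t"
    using True st u by simp
  ultimately show ?thesis
    using u by linarith
next
  case False
  with \<eta> have \<eta>: "\<eta> = -1"
    by simp
  show ?thesis
  proof (rule ccontr)
    assume "\<not> ?thesis"
    then have "real_of_int (-t) \<le> u * (s + 1)"
      using \<eta> by (auto simp: algebra_simps)
    also have "\<dots> < s + 1"
      using u st by simp
    finally have "-t \<le> s" and "-t \<noteq> s"
      using parity by auto
    then have ts: "-t \<le> s - 1"
      by linarith
    have "(s - 1) * q \<le> (-t) * q'"
      using range by (simp add: algebra_simps)
    also have "\<dots> \<le> (s - 1) * q'"
      using ts q' by (intro mult_right_mono) auto
    finally show False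
      using ts st q' by simp
  qed
qed

lemma eicf_coefficient_bound_neg_pos:
  fixes s t q q' \<eta> :: int and u :: real
  assumes st: "s < 0" "t > 0" and parity: "even t" and range: "0 < s * q + t * q'"
    and q': "1 \<le> q'" "q' < q" and u: "0 < u" "u < 1" and \<eta>: "\<eta> = 1 \<or> \<eta> = -1"
  shows "u < \<bar>t - \<eta> * s * u\<bar>"
proof (cases "\<eta> = 1")
  case True
  have "t \<ge> 2"
    using st parity by (auto elim!: evenE)
  moreover have "t - \<eta> * s * u \<ge> t"
    using True st u by (simp add: mult_nonpos_nonneg)
  ultimately show ?thesis
    using u by linarith
next
  case False
  with \<eta> have \<eta>: "\<eta> = -1"
    by simp
  show ?thesis
  proof (rule ccontr)
    assume "\<not> ?thesis"
    then have "real_of_int t \<le> u * (1 - s)"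
      using \<eta> by (auto simp: algebra_simps)
    also have "\<dots> < 1 - s"
      using u st by simp
    finally have ts: "t \<le> -s"
      by linarith
    have "t * q' < t * q"
      using q' st by simp
    also have "\<dots> \<le> (-s) * q"
      using ts q' st by (intro mult_right_mono) auto
    finally show False
      using range by (simp add: algebra_simps)
  qed
qed

lemma eicf_coefficient_bound:
  fixes s t q q' \<eta> :: int and u :: real
  assumes parity: "odd s" "even t" and ne: "(s, t) \<noteq> (1, 0)"
    and range: "0 < s * q + t * q'" "s * q + t * q' \<le> q"
    and q': "1 \<le> q'" "q' < q" and u: "0 < u" "u < 1" and \<eta>: "\<eta> = 1 \<or> \<eta> = -1"
  shows "u < \<bar>t - \<eta> * s * u\<bar>"
proof -
  have "t \<noteq> 0"
  proof
    assume "t = 0"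
    then have "0 < s * q" "s * q \<le> 1 * q"
      using range by auto
    then have "s = 1"
      using q' by (simp add: zero_less_mult_iff)
    then show False
      using \<open>t = 0\<close> ne by simp
  qed
  moreover have "s \<noteq> 0"
    using parity(1) by auto
  ultimately have "s > 0 \<and> t < 0 \<or> s < 0 \<and> t > 0"
    using opposite_signs[of q q' s t] q' range by simp
  then show ?thesis
    using eicf_coefficient_bound_pos_neg[OF _ _ parity range(2) q' u \<eta>]
      eicf_coefficient_bound_neg_pos[OF _ _ parity(2) range(1) q' u \<eta>] by blast
qed

lemma best_1rat_approx_of_remainders:
  fixes p q p' q' \<eta> :: int and y u :: real
  assumes det: "p' * q - p * q' = 1 \<or> p' * q - p * q' = -1"
    and odd: "odd (q - p)" "odd q"
    and q': "1 \<le> q'" "q' < q"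
    and u: "0 < u" "u < 1" and \<eta>: "\<eta> = 1 \<or> \<eta> = -1"
    and remainder: "of_int q * y - of_int p = - of_int \<eta> * u * (of_int q' * y - of_int p')"
    and nonzero: "of_int q' * y - of_int p' \<noteq> 0"
  shows "best_1rat_approx (1 - y) (q - p) q"
  unfolding best_1rat_approx_def
proof (intro conjI allI impI)
  have det': "p * q' - p' * q = 1 \<or> p * q' - p' * q = -1"
    using det by auto
  then have "coprime p q"
    by (rule coprime_if_det_unit)
  then have "coprime (q - p) q"
    by (simp add: gcd_diff2 gcd_eq_1_imp_coprime)
  then show "one_rational (q - p) q"
    unfolding one_rational_def using odd q' by simp
  fix a b
  assume ab: "one_rational a b \<and> (a, b) \<noteq> (q - p, q) \<and> b \<le> q"
  then have "b > 0" "odd a" "odd b"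
    unfolding one_rational_def by auto
  have "even p"
    using odd by simp
  have "odd p'"
  proof
    assume "even p'"
    then have "even (p' * q - p * q')"
      using \<open>even p\<close> by (intro dvd_diff dvd_mult2)
    with det show False
      by (metis even_minus odd_one)
  qed
  obtain s t where c: "b - a = s * p + t * p'" and b: "b = s * q + t * q'"
    using det' by (rule unimodular_coords)
  have "even t"
    using c \<open>even p\<close> \<open>odd p'\<close> \<open>odd a\<close> \<open>odd b\<close> by (metis even_add even_diff even_mult_iff)
  have "odd s"
    using b \<open>even t\<close> \<open>odd b\<close> by auto
  have "(s, t) \<noteq> (1, 0)"
    using ab b c by auto
  then have bound: "u < \<bar>of_int t - of_int \<eta> * of_int s * u\<bar>"
    using eicf_coefficient_bound[OF \<open>odd s\<close> \<open>even t\<close> _ _ _ q' u \<eta>] b ab \<open>b > 0\<close> by simp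
  have "of_int b * (1 - y) - of_int a =
        - (of_int s * (of_int q * y - of_int p) + of_int t * (of_int q' * y - of_int p'))"
  proof -
    have "a = s * (q - p) + t * (q' - p')"
      using b c by (simp add: algebra_simps)
    then have a: "real_of_int a = of_int s * (of_int q - of_int p) + of_int t * (of_int q' - of_int p')"
      by simp
    show ?thesis
      unfolding a b by (simp add: algebra_simps)
  qed
  also have "\<dots> = - (of_int q' * y - of_int p') * (of_int t - of_int \<eta> * of_int s * u)"
    unfolding remainder by (simp add: algebra_simps)
  finally have "\<bar>of_int b * (1 - y) - of_int a\<bar> =
                \<bar>of_int q' * y - of_int p'\<bar> * \<bar>of_int t - of_int \<eta> * of_int s * u\<bar>"
    by (simp add: abs_mult abs_minus_commute)
  moreover have "\<bar>of_int q * (1 - y) - of_int (q - p)\<bar> = \<bar>of_int q' * y - of_int p'\<bar> * u"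
  proof -
    have "of_int q * (1 - y) - of_int (q - p) = - (of_int q * y - of_int p)"
      by (simp add: algebra_simps)
    then show ?thesis
      unfolding remainder using u \<eta> by (auto simp: abs_mult)
  qed
  ultimately show "\<bar>of_int q * (1 - y) - of_int (q - p)\<bar> < \<bar>of_int b * (1 - y) - of_int a\<bar>"
    using bound nonzero by simp
qed

lemma eicf_convergent_best_1rat_approx:
  assumes irrational: "x \<notin> \<rat>" and expansion: "is_eicf_expansion (1 - x) b eta"
    and "n \<ge> 1" and pq: "eicf_pq b eta n = (p, q)" and odd: "odd (q - p)" "odd q"
  shows "best_1rat_approx x (q - p) q" and "q \<ge> 2"
proof -
  define y where "y = 1 - x"
  have "y \<notin> \<rat>"
    using irrational Rats_diff_iff[of 1 x] unfolding y_def by simp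
  note orbit = eicf_expansion_orbit[OF this expansion[folded y_def]]
  interpret eicf_digits b eta
    using eicf_expansion_digits[OF \<open>y \<notin> \<rat>\<close> expansion[folded y_def]] .
  obtain m where n: "n = Suc m"
    using \<open>n \<ge> 1\<close> by (cases n) auto
  have p: "p = eicf_num b eta n" and q: "q = eicf_den b eta n"
    using eicf_pq_eq[OF \<open>n \<ge> 1\<close>] pq by simp_all
  have remainder: "of_int q * y - of_int p = - of_int (eta n) * (TE ^^ n) y *
                   (of_int (eicf_den b eta m) * y - of_int (eicf_num b eta m))"
  proof -
    have "(TE ^^ k) y \<noteq> 0" for k
      using orbit(1)[of k] Rats_0 by metis
    then show ?thesis
      using eicf_remainder_Suc[where ys = "\<lambda>k. (TE ^^ k) y", OF orbit(2), of m] unfolding p q n by simp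
  qed
  have nonzero: "of_int (eicf_den b eta m) * y - of_int (eicf_num b eta m) \<noteq> 0"
  proof
    assume "of_int (eicf_den b eta m) * y - of_int (eicf_num b eta m) = 0"
    then have "y = of_int (eicf_num b eta m) / of_int (eicf_den b eta m)"
      using eicf_den_increasing[of m] by (simp add: field_simps)
    then show False
      using \<open>y \<notin> \<rat>\<close> by simp
  qed
  have q': "1 \<le> eicf_den b eta m" "eicf_den b eta m < q"
    using eicf_den_increasing[of m] unfolding q n by auto
  then show "q \<ge> 2"
    by simp
  have det: "eicf_num b eta m * q - p * eicf_den b eta m = 1 \<or>
             eicf_num b eta m * q - p * eicf_den b eta m = -1"
    using eicf_det[of m] unfolding p q n .
  have u: "0 < (TE ^^ n) y" "(TE ^^ n) y < 1"
    using orbit(3,4)[of m] unfolding n .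
  have "best_1rat_approx (1 - y) (q - p) q"
    using best_1rat_approx_of_remainders[OF det odd q' u sign_pm1[OF \<open>n \<ge> 1\<close>] remainder nonzero] .
  then show "best_1rat_approx x (q - p) q"
    unfolding y_def by simp
qed

section \<open>Inverse branches of the OOCF map\<close>

text \<open>The inverse of \<open>oocf_T\<close> on \<open>oocf_B \<alpha> \<epsilon>\<close>.\<close>

definition oocf_branch :: "int \<Rightarrow> int \<Rightarrow> real \<Rightarrow> real" where
  "oocf_branch \<alpha> \<epsilon> = moebius (\<alpha> - 1) (\<alpha> + \<epsilon> - 1) \<alpha> (\<alpha> + \<epsilon>)"

lemma oocf_D_bounds:
  assumes "(\<alpha>, \<epsilon>) \<in> oocf_D"
  shows "\<alpha> \<ge> 1" and "\<epsilon> = 1 \<or> \<epsilon> = -1" and "\<alpha> + \<epsilon> \<ge> 1"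
  using assms unfolding oocf_D_def by auto

lemma oocf_B_cases:
  assumes "(\<alpha>, \<epsilon>) \<in> oocf_D" and "t \<in> oocf_B \<alpha> \<epsilon>"
  obtains (eps_minus) "\<epsilon> = -1" "\<alpha> \<ge> 2" "(real_of_int \<alpha> - 2) / (real_of_int \<alpha> - 1) \<le> t"
      "t \<le> (2 * real_of_int \<alpha> - 3) / (2 * real_of_int \<alpha> - 1)"
  | (eps_plus) "\<epsilon> = 1" "\<alpha> \<ge> 1" "(2 * real_of_int \<alpha> - 1) / (2 * real_of_int \<alpha> + 1) \<le> t"
      "t \<le> real_of_int \<alpha> / (real_of_int \<alpha> + 1)"
proof (cases "\<epsilon> = -1")
  case True
  then have "\<alpha> \<ge> 2"
    using assms(1) unfolding oocf_D_def by auto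
  moreover have "real_of_int \<alpha> - 1 - 1 = real_of_int \<alpha> - 2"
    "2 * (real_of_int \<alpha> - 1) - 1 = 2 * real_of_int \<alpha> - 3"
    "2 * (real_of_int \<alpha> - 1) + 1 = 2 * real_of_int \<alpha> - 1"
    by simp_all
  ultimately show ?thesis
    using eps_minus assms(2) True unfolding oocf_B_def Let_def by auto
next
  case False
  then have "\<epsilon> = 1" "\<alpha> \<ge> 1"
    using assms(1) unfolding oocf_D_def by auto
  then show ?thesis
    using eps_plus assms(2) unfolding oocf_B_def Let_def by auto
qed

lemma oocf_B_bounds:
  assumes "(\<alpha>, \<epsilon>) \<in> oocf_D" and "t \<in> oocf_B \<alpha> \<epsilon>"
  shows "0 \<le> t" and "t < 1"
proof -
  have "0 \<le> t \<and> t < 1"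
    using assms
  proof (cases rule: oocf_B_cases)
    case eps_minus
    have "0 \<le> (real_of_int \<alpha> - 2) / (real_of_int \<alpha> - 1)"
      "(2 * real_of_int \<alpha> - 3) / (2 * real_of_int \<alpha> - 1) < 1"
      using eps_minus by simp_all
    then show ?thesis
      using eps_minus by linarith
  next
    case eps_plus
    have "0 \<le> (2 * real_of_int \<alpha> - 1) / (2 * real_of_int \<alpha> + 1)"
      "real_of_int \<alpha> / (real_of_int \<alpha> + 1) < 1"
      using eps_plus by simp_all
    then show ?thesis
      using eps_plus by linarith
  qed
  then show "0 \<le> t" "t < 1"
    by simp_all
qed

lemma oocf_T_eq:
  assumes "t < 1" and "\<lfloor>1 / (1 - t)\<rfloor> = k"
  shows "oocf_T t = (if t \<le> (2 * of_int k - 1) / (2 * of_int k + 1)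
                     then (of_int k * t - (of_int k - 1)) / (of_int k - (of_int k + 1) * t)
                     else (of_int k - (of_int k + 1) * t) / (of_int k * t - (of_int k - 1)))"
  using assms unfolding oocf_T_def Let_def by simp

lemma oocf_T_minus:
  fixes \<alpha> :: int
  assumes "\<alpha> \<ge> 2" and lo: "(real_of_int \<alpha> - 2) / (real_of_int \<alpha> - 1) \<le> t"
    and hi: "t \<le> (2 * real_of_int \<alpha> - 3) / (2 * real_of_int \<alpha> - 1)"
  shows "oocf_T t = moebius (\<alpha> - 1) (2 - \<alpha>) (- \<alpha>) (\<alpha> - 1) t"
    and "real_of_int (- \<alpha>) * t + real_of_int (\<alpha> - 1) > 0"
proof -
  define K where "K = real_of_int \<alpha>"
  have K: "K \<ge> 2"
    using assms(1) unfolding K_def by simp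
  have lo': "(K - 1) * t \<ge> K - 2" and hi': "(2 * K - 1) * t \<le> 2 * K - 3"
    using lo hi K unfolding K_def[symmetric] by (simp_all add: field_simps)
  have "(K * t) * (2 * (2 * K - 1)) = 2 * K * ((2 * K - 1) * t)"
    by (simp add: algebra_simps)
  also have "\<dots> \<le> 2 * K * (2 * K - 3)"
    using hi' K by (intro mult_left_mono) auto
  also have "\<dots> < (K - 1) * (2 * (2 * K - 1))"
    by (simp add: algebra_simps)
  finally have Kt: "K * t < K - 1"
    using K by (simp add: mult_less_cancel_right)
  then show "real_of_int (- \<alpha>) * t + real_of_int (\<alpha> - 1) > 0"
    unfolding K_def by simp
  have "t < 1"
    using Kt K by (smt (verit) mult_le_cancel_left1)
  then have "K - 1 \<le> 1 / (1 - t)" "1 / (1 - t) < K"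
    using lo' Kt by (simp_all add: field_simps)
  then have floor: "\<lfloor>1 / (1 - t)\<rfloor> = \<alpha> - 1"
    unfolding K_def by (simp add: floor_eq_iff)
  have "t \<le> (2 * of_int (\<alpha> - 1) - 1) / (2 * of_int (\<alpha> - 1) + 1)"
    using hi by (simp add: algebra_simps)
  then have "oocf_T t = (of_int (\<alpha> - 1) * t - (of_int (\<alpha> - 1) - 1)) / (of_int (\<alpha> - 1) - (of_int (\<alpha> - 1) + 1) * t)"
    using oocf_T_eq[OF \<open>t < 1\<close> floor] by (simp only: if_True)
  then show "oocf_T t = moebius (\<alpha> - 1) (2 - \<alpha>) (- \<alpha>) (\<alpha> - 1) t"
    unfolding moebius_def by (simp add: algebra_simps)
qed

lemma oocf_T_right_endpoint:
  fixes \<alpha> :: int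
  assumes "\<alpha> \<ge> 1"
  shows "oocf_T (real_of_int \<alpha> / (real_of_int \<alpha> + 1)) = 0"
proof -
  define K t where "K = real_of_int \<alpha>" and "t = K / (K + 1)"
  have K: "K \<ge> 1"
    using assms unfolding K_def by simp
  then have Kt: "(K + 1) * t = K" and "t < 1" and "1 - t = 1 / (K + 1)"
    unfolding t_def by (simp_all add: field_simps)
  then have floor: "\<lfloor>1 / (1 - t)\<rfloor> = \<alpha> + 1"
    unfolding K_def by simp
  have "(2 * K + 3) * t = 2 * ((K + 1) * t) + t"
    by (simp add: algebra_simps)
  then have "(2 * K + 3) * t \<le> 2 * K + 1"
    using Kt \<open>t < 1\<close> by linarith
  then have "t \<le> (2 * of_int (\<alpha> + 1) - 1) / (2 * of_int (\<alpha> + 1) + 1)"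
    using K by (simp add: K_def field_simps)
  then have "oocf_T t = (of_int (\<alpha> + 1) * t - (of_int (\<alpha> + 1) - 1)) / (of_int (\<alpha> + 1) - (of_int (\<alpha> + 1) + 1) * t)"
    using oocf_T_eq[OF \<open>t < 1\<close> floor] by (simp only: if_True)
  also have "\<dots> = 0"
    using Kt unfolding K_def by (simp add: algebra_simps)
  finally show ?thesis
    unfolding t_def K_def .
qed

lemma oocf_T_plus:
  fixes \<alpha> :: int
  assumes "\<alpha> \<ge> 1" and lo: "(2 * real_of_int \<alpha> - 1) / (2 * real_of_int \<alpha> + 1) \<le> t"
    and hi: "t \<le> real_of_int \<alpha> / (real_of_int \<alpha> + 1)"
  shows "oocf_T t = moebius (- \<alpha> - 1) \<alpha> \<alpha> (1 - \<alpha>) t"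
    and "real_of_int \<alpha> * t + real_of_int (1 - \<alpha>) > 0"
proof -
  define K where "K = real_of_int \<alpha>"
  have K: "K \<ge> 1"
    using assms(1) unfolding K_def by simp
  have lo': "(2 * K + 1) * t \<ge> 2 * K - 1" and hi': "(K + 1) * t \<le> K"
    using lo hi K unfolding K_def[symmetric] by (simp_all add: field_simps)
  have "(K - 1) * (2 * K + 1) < K * (2 * K - 1)"
    by (simp add: algebra_simps)
  also have "\<dots> \<le> K * ((2 * K + 1) * t)"
    using lo' K by (intro mult_left_mono) auto
  also have "\<dots> = (K * t) * (2 * K + 1)"
    by (simp add: algebra_simps)
  finally have Kt: "K * t > K - 1"
    using K by (simp add: mult_less_cancel_right)
  then show pos: "real_of_int \<alpha> * t + real_of_int (1 - \<alpha>) > 0"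
    unfolding K_def by simp
  have "t < 1"
    using hi' K by (smt (verit) mult_le_cancel_left1)
  show "oocf_T t = moebius (- \<alpha> - 1) \<alpha> \<alpha> (1 - \<alpha>) t"
  proof (cases "(K + 1) * t = K")
    case True
    then have "t = real_of_int \<alpha> / (real_of_int \<alpha> + 1)"
      using K unfolding K_def by (simp add: field_simps)
    then have "oocf_T t = 0"
      using oocf_T_right_endpoint[OF assms(1)] by simp
    also have "\<dots> = moebius (- \<alpha> - 1) \<alpha> \<alpha> (1 - \<alpha>) t"
      using True unfolding moebius_def K_def by (simp add: algebra_simps)
    finally show ?thesis .
  next
    case False
    then have "(K + 1) * t < K"
      using hi' by simp
    then have "K \<le> 1 / (1 - t)" "1 / (1 - t) < K + 1"
      using Kt \<open>t < 1\<close> by (simp_all add: field_simps)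
    then have floor: "\<lfloor>1 / (1 - t)\<rfloor> = \<alpha>"
      unfolding K_def by (simp add: floor_eq_iff)
    have "(K * t - (K - 1)) / (K - (K + 1) * t) = (K - (K + 1) * t) / (K * t - (K - 1))"
      if "t \<le> (2 * K - 1) / (2 * K + 1)"
    proof -
      have "(2 * K + 1) * t \<le> 2 * K - 1"
        using that K by (simp add: field_simps)
      then have same: "K * t - (K - 1) = K - (K + 1) * t"
        using lo' by (simp add: algebra_simps)
      show ?thesis
        by (simp only: same)
    qed
    then have "oocf_T t = (K - (K + 1) * t) / (K * t - (K - 1))"
      using oocf_T_eq[OF \<open>t < 1\<close> floor] unfolding K_def by (auto split: if_splits)
    then show ?thesis
      unfolding moebius_def K_def by (simp add: algebra_simps)
  qed
qed

lemma oocf_branch_oocf_T: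
  assumes "(\<alpha>, \<epsilon>) \<in> oocf_D" and "t \<in> oocf_B \<alpha> \<epsilon>"
  shows "oocf_branch \<alpha> \<epsilon> (oocf_T t) = t"
  using assms
proof (cases rule: oocf_B_cases)
  case eps_minus
  then have "oocf_branch \<alpha> \<epsilon> (oocf_T t) = moebius 1 0 0 1 t"
    using oocf_T_minus[of \<alpha> t] unfolding oocf_branch_def
    by (simp add: moebius_moebius algebra_simps)
  then show ?thesis
    by (simp add: moebius_def)
next
  case eps_plus
  then have "oocf_branch \<alpha> \<epsilon> (oocf_T t) = moebius 1 0 0 1 t"
    using oocf_T_plus[of \<alpha> t] unfolding oocf_branch_def
    by (simp add: moebius_moebius algebra_simps)
  then show ?thesis
    by (simp add: moebius_def)
qed

section \<open>OOCF principal convergents\<close>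

definition oocf_step :: "int \<Rightarrow> int \<Rightarrow> real \<Rightarrow> real" where
  "oocf_step \<alpha> \<epsilon> v = 1 - 1 / (of_int \<alpha> + of_int \<epsilon> / (1 + v))"

fun oocf_comp :: "(nat \<Rightarrow> int) \<Rightarrow> (nat \<Rightarrow> int) \<Rightarrow> nat \<Rightarrow> nat \<Rightarrow> real \<Rightarrow> real" where
  "oocf_comp a e i 0 v = oocf_step (a i) (e i) v"
| "oocf_comp a e i (Suc r) v = oocf_step (a i) (e i) (oocf_comp a e (Suc i) r v)"

lemma oocf_tail_eq_comp: "1 - 1 / oocf_tail a e r i = oocf_comp a e i r 1"
proof (induction r arbitrary: i)
  case 0
  then show ?case by (simp add: oocf_step_def)
next
  case (Suc r)
  have "1 - 1 / oocf_tail a e (Suc r) i = oocf_step (a i) (e i) (1 - 1 / oocf_tail a e r (Suc i))"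
    unfolding oocf_step_def by (simp add: algebra_simps)
  then show ?case
    using Suc.IH by simp
qed

lemma oocf_comp_Suc_inner:
  "oocf_comp a e i (Suc r) v = oocf_comp a e i r (oocf_step (a (i + r + 1)) (e (i + r + 1)) v)"
  by (induction r arbitrary: i) simp_all

lemma oocf_branch_den_pos:
  assumes "(\<alpha>, \<epsilon>) \<in> oocf_D" and "0 \<le> v"
  shows "of_int \<alpha> * v + of_int (\<alpha> + \<epsilon>) > (0::real)"
proof -
  have "of_int \<alpha> * v \<ge> 0" and "of_int (\<alpha> + \<epsilon>) \<ge> (1::real)"
    using oocf_D_bounds[OF assms(1)] assms(2) by simp_all
  then show ?thesis
    by linarith
qed

lemma oocf_step_eq_branch:
  assumes "(\<alpha>, \<epsilon>) \<in> oocf_D" and "0 \<le> v"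
  shows "oocf_step \<alpha> \<epsilon> v = oocf_branch \<alpha> \<epsilon> v"
proof -
  have den: "of_int \<alpha> * (1 + v) + of_int \<epsilon> > (0::real)"
    using oocf_branch_den_pos[OF assms] by (simp add: algebra_simps)
  have "of_int \<alpha> + of_int \<epsilon> / (1 + v) = (of_int \<alpha> * (1 + v) + of_int \<epsilon>) / (1 + v)"
    using assms(2) by (simp add: field_simps)
  then have "oocf_step \<alpha> \<epsilon> v = 1 - (1 + v) / (of_int \<alpha> * (1 + v) + of_int \<epsilon>)"
    unfolding oocf_step_def by simp
  also have "\<dots> = oocf_branch \<alpha> \<epsilon> v"
    unfolding oocf_branch_def moebius_def using den by (simp add: field_simps)
  finally show ?thesis .
qed

lemma oocf_branch_bounds:
  assumes "(\<alpha>, \<epsilon>) \<in> oocf_D" and "0 \<le> v" and "v \<le> 1"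
  shows "0 \<le> oocf_branch \<alpha> \<epsilon> v" and "oocf_branch \<alpha> \<epsilon> v \<le> 1"
proof -
  have den: "of_int \<alpha> * v + of_int (\<alpha> + \<epsilon>) > (0::real)"
    using oocf_branch_den_pos[OF assms(1,2)] .
  have "of_int (\<alpha> - 1) * v + of_int (\<alpha> + \<epsilon> - 1) \<ge> (0::real)"
    using oocf_D_bounds[OF assms(1)] assms(2) by simp
  moreover have "of_int (\<alpha> - 1) * v + of_int (\<alpha> + \<epsilon> - 1) \<le> of_int \<alpha> * v + (of_int (\<alpha> + \<epsilon>) :: real)"
    using assms(2) by (simp add: algebra_simps)
  ultimately show "0 \<le> oocf_branch \<alpha> \<epsilon> v" "oocf_branch \<alpha> \<epsilon> v \<le> 1"
    unfolding oocf_branch_def moebius_def using den by simp_all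
qed

text \<open>The matrix \<open>(oocf_mA m, oocf_mB m; oocf_mC m, oocf_mD m)\<close> is the product of the matrices
  of the first \<open>m\<close> inverse branches \<open>oocf_branch (a k) (e k)\<close>.\<close>

fun oocf_mA :: "(nat \<Rightarrow> int) \<Rightarrow> (nat \<Rightarrow> int) \<Rightarrow> nat \<Rightarrow> int"
  and oocf_mB :: "(nat \<Rightarrow> int) \<Rightarrow> (nat \<Rightarrow> int) \<Rightarrow> nat \<Rightarrow> int" where
  "oocf_mA a e 0 = 1"
| "oocf_mA a e (Suc m) = (a (Suc m) - 1) * oocf_mA a e m + a (Suc m) * oocf_mB a e m"
| "oocf_mB a e 0 = 0"
| "oocf_mB a e (Suc m) = (a (Suc m) + e (Suc m) - 1) * oocf_mA a e m + (a (Suc m) + e (Suc m)) * oocf_mB a e m"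

fun oocf_mC :: "(nat \<Rightarrow> int) \<Rightarrow> (nat \<Rightarrow> int) \<Rightarrow> nat \<Rightarrow> int"
  and oocf_mD :: "(nat \<Rightarrow> int) \<Rightarrow> (nat \<Rightarrow> int) \<Rightarrow> nat \<Rightarrow> int" where
  "oocf_mC a e 0 = 0"
| "oocf_mC a e (Suc m) = (a (Suc m) - 1) * oocf_mC a e m + a (Suc m) * oocf_mD a e m"
| "oocf_mD a e 0 = 1"
| "oocf_mD a e (Suc m) = (a (Suc m) + e (Suc m) - 1) * oocf_mC a e m + (a (Suc m) + e (Suc m)) * oocf_mD a e m"

definition oocf_num :: "(nat \<Rightarrow> int) \<Rightarrow> (nat \<Rightarrow> int) \<Rightarrow> nat \<Rightarrow> int" where
  "oocf_num a e m = oocf_mA a e m + oocf_mB a e m"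

definition oocf_den :: "(nat \<Rightarrow> int) \<Rightarrow> (nat \<Rightarrow> int) \<Rightarrow> nat \<Rightarrow> int" where
  "oocf_den a e m = oocf_mC a e m + oocf_mD a e m"

lemma oocf_num_Suc:
  "oocf_num a e (Suc m) =
   (2 * a (Suc m) + e (Suc m) - 2) * oocf_mA a e m + (2 * a (Suc m) + e (Suc m)) * oocf_mB a e m"
  unfolding oocf_num_def by (simp add: algebra_simps)

lemma oocf_den_Suc:
  "oocf_den a e (Suc m) =
   (2 * a (Suc m) + e (Suc m) - 2) * oocf_mC a e m + (2 * a (Suc m) + e (Suc m)) * oocf_mD a e m"
  unfolding oocf_den_def by (simp add: algebra_simps)

lemma oocf_expansion_Suc:
  assumes "is_oocf_expansion x a e"
  shows "(a (Suc k), e (Suc k)) \<in> oocf_D" and "(oocf_T ^^ k) x \<in> oocf_B (a (Suc k)) (e (Suc k))"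
  using assms unfolding is_oocf_expansion_def by (metis diff_Suc_1 le_add1 plus_1_eq_Suc)+

locale oocf_digits =
  fixes a e :: "nat \<Rightarrow> int"
  assumes digit_in_D: "\<And>k. k \<ge> 1 \<Longrightarrow> (a k, e k) \<in> oocf_D"
begin

lemma digit_in_D_Suc: "(a (Suc m), e (Suc m)) \<in> oocf_D"
  using digit_in_D by simp

lemma digit_bounds: "a (Suc m) \<ge> 1" "e (Suc m) = 1 \<or> e (Suc m) = -1" "a (Suc m) + e (Suc m) \<ge> 1"
  using oocf_D_bounds[OF digit_in_D_Suc] by simp_all

lemma oocf_mC_mD_pos: "oocf_mC a e m \<ge> 0 \<and> oocf_mD a e m \<ge> 1"
proof (induction m)
  case 0
  then show ?case by simp
next
  case (Suc m)
  have "(a (Suc m) + e (Suc m)) * oocf_mD a e m \<ge> 1 * 1"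
    using digit_bounds[of m] Suc.IH by (intro mult_mono) auto
  moreover have "(a (Suc m) + e (Suc m) - 1) * oocf_mC a e m \<ge> 0"
    using digit_bounds[of m] Suc.IH by simp
  ultimately have "oocf_mD a e (Suc m) \<ge> 1"
    by simp
  moreover have "oocf_mC a e (Suc m) \<ge> 0"
    using digit_bounds[of m] Suc.IH by simp
  ultimately show ?case
    by simp
qed

lemma oocf_det:
  "oocf_mA a e m * oocf_mD a e m - oocf_mB a e m * oocf_mC a e m = 1 \<or>
   oocf_mA a e m * oocf_mD a e m - oocf_mB a e m * oocf_mC a e m = -1"
proof (induction m)
  case 0
  then show ?case by simp
next
  case (Suc m)
  have "oocf_mA a e (Suc m) * oocf_mD a e (Suc m) - oocf_mB a e (Suc m) * oocf_mC a e (Suc m) =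
        - e (Suc m) * (oocf_mA a e m * oocf_mD a e m - oocf_mB a e m * oocf_mC a e m)"
    by (simp add: algebra_simps)
  then show ?case
    using Suc.IH digit_bounds(2)[of m] by auto
qed

lemma odd_oocf_num_den: "odd (oocf_num a e m) \<and> odd (oocf_den a e m)"
proof (induction m)
  case 0
  then show ?case by (simp add: oocf_num_def oocf_den_def)
next
  case (Suc m)
  have "odd (2 * a (Suc m) + e (Suc m))"
    using digit_bounds(2)[of m] by auto
  then show ?case
    using Suc.IH unfolding oocf_num_Suc oocf_den_Suc by (simp add: oocf_num_def oocf_den_def)
qed

lemma moebius_oocf_Suc:
  assumes "0 \<le> v"
  shows "moebius (oocf_mA a e m) (oocf_mB a e m) (oocf_mC a e m) (oocf_mD a e m)
           (oocf_branch (a (Suc m)) (e (Suc m)) v) =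
         moebius (oocf_mA a e (Suc m)) (oocf_mB a e (Suc m)) (oocf_mC a e (Suc m)) (oocf_mD a e (Suc m)) v"
proof -
  have "of_int (a (Suc m)) * v + of_int (a (Suc m) + e (Suc m)) \<noteq> (0::real)"
    using oocf_branch_den_pos[OF digit_in_D_Suc[of m] assms] by linarith
  then show ?thesis
    unfolding oocf_branch_def by (simp add: moebius_moebius mult.commute)
qed

lemma oocf_den_increasing: "oocf_den a e (Suc m) \<ge> oocf_den a e m + 1"
proof -
  have "oocf_den a e (Suc m) - oocf_den a e m =
        (2 * a (Suc m) + e (Suc m) - 3) * oocf_mC a e m + (2 * a (Suc m) + e (Suc m) - 1) * oocf_mD a e m"
    unfolding oocf_den_Suc by (simp add: oocf_den_def algebra_simps)
  moreover have "2 * a (Suc m) + e (Suc m) - 3 \<ge> 0"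
    using digit_bounds[of m] by auto
  then have "(2 * a (Suc m) + e (Suc m) - 3) * oocf_mC a e m \<ge> 0"
    using oocf_mC_mD_pos[of m] by simp
  moreover have "(2 * a (Suc m) + e (Suc m) - 1) * oocf_mD a e m \<ge> 1 * 1"
    using digit_bounds[of m] oocf_mC_mD_pos[of m] by (intro mult_mono) auto
  ultimately show ?thesis
    by linarith
qed

lemma oocf_den_ge: "oocf_den a e m \<ge> int m + 1"
proof (induction m)
  case 0
  then show ?case by (simp add: oocf_den_def)
next
  case (Suc m)
  then show ?case
    using oocf_den_increasing[of m] by simp
qed

lemma oocf_den_bracket:
  assumes "q \<ge> 1"
  obtains m where "oocf_den a e m \<le> q" and "q < oocf_den a e (Suc m)"
proof -
  define k where "k = (LEAST k. q < oocf_den a e k)"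
  have "q < oocf_den a e (nat q)"
    using oocf_den_ge[of "nat q"] assms by simp
  then have above: "q < oocf_den a e k"
    unfolding k_def by (rule LeastI)
  have "k \<noteq> 0"
  proof
    assume "k = 0"
    with above assms show False
      by (simp add: oocf_den_def)
  qed
  then obtain m where k: "k = Suc m"
    using not0_implies_Suc by blast
  have "\<not> q < oocf_den a e m"
    using not_less_Least[of m "\<lambda>k. q < oocf_den a e k"] unfolding k_def[symmetric] k by simp
  then have "oocf_den a e m \<le> q"
    by simp
  then show ?thesis
    using above unfolding k by (rule that)
qed

lemma oocf_comp_eq_moebius:
  assumes "0 \<le> v" and "v \<le> 1"
  shows "oocf_comp a e 1 m v =
         moebius (oocf_mA a e (Suc m)) (oocf_mB a e (Suc m)) (oocf_mC a e (Suc m)) (oocf_mD a e (Suc m)) v"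
  using assms
proof (induction m arbitrary: v)
  case 0
  then show ?case
    using oocf_step_eq_branch[OF digit_in_D_Suc[of 0]] by (simp add: oocf_branch_def moebius_def)
next
  case (Suc m)
  define \<alpha> \<epsilon> where "\<alpha> = a (Suc (Suc m))" and "\<epsilon> = e (Suc (Suc m))"
  have D: "(\<alpha>, \<epsilon>) \<in> oocf_D"
    using digit_in_D_Suc unfolding \<alpha>_def \<epsilon>_def .
  have "oocf_comp a e 1 (Suc m) v = oocf_comp a e 1 m (oocf_branch \<alpha> \<epsilon> v)"
    using oocf_comp_Suc_inner[of a e 1 m v] oocf_step_eq_branch[OF D Suc.prems(1)]
    by (simp add: \<alpha>_def \<epsilon>_def)
  also have "\<dots> = moebius (oocf_mA a e (Suc m)) (oocf_mB a e (Suc m)) (oocf_mC a e (Suc m)) (oocf_mD a e (Suc m))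
                     (oocf_branch \<alpha> \<epsilon> v)"
    using oocf_branch_bounds[OF D Suc.prems] by (intro Suc.IH)
  also have "\<dots> = moebius (oocf_mA a e (Suc (Suc m))) (oocf_mB a e (Suc (Suc m)))
                     (oocf_mC a e (Suc (Suc m))) (oocf_mD a e (Suc (Suc m))) v"
    unfolding \<alpha>_def \<epsilon>_def by (rule moebius_oocf_Suc[OF Suc.prems(1)])
  finally show ?case .
qed

lemma oocf_conv_eq:
  assumes "m \<ge> 1"
  shows "oocf_conv a e m = of_int (oocf_num a e m) / of_int (oocf_den a e m)"
proof -
  obtain k where m: "m = Suc k"
    using assms by (cases m) auto
  have "oocf_conv a e m = oocf_comp a e 1 k 1"
    unfolding oocf_conv_def m oocf_tail_eq_comp by simp
  also have "\<dots> = moebius (oocf_mA a e m) (oocf_mB a e m) (oocf_mC a e m) (oocf_mD a e m) 1"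
    unfolding m by (rule oocf_comp_eq_moebius) auto
  finally show ?thesis
    unfolding moebius_def oocf_num_def oocf_den_def by simp
qed

lemma oocf_expansion_moebius:
  assumes "is_oocf_expansion x a e"
  shows "x = moebius (oocf_mA a e m) (oocf_mB a e m) (oocf_mC a e m) (oocf_mD a e m) ((oocf_T ^^ m) x)"
proof (induction m)
  case 0
  then show ?case
    unfolding moebius_def by simp
next
  case (Suc m)
  note B = oocf_expansion_Suc(2)[OF assms]
  have "0 \<le> (oocf_T ^^ Suc m) x"
    using oocf_B_bounds(1)[OF digit_in_D_Suc B[of "Suc m"]] .
  moreover have "oocf_branch (a (Suc m)) (e (Suc m)) ((oocf_T ^^ Suc m) x) = (oocf_T ^^ m) x"
    using oocf_branch_oocf_T[OF digit_in_D_Suc B[of m]] by simp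
  ultimately show ?case
    using Suc.IH moebius_oocf_Suc by metis
qed

lemma oocf_convergent_one_rational: "one_rational (oocf_num a e m) (oocf_den a e m)"
  unfolding one_rational_def
proof (intro conjI)
  show "oocf_den a e m > 0" and "odd (oocf_num a e m)" and "odd (oocf_den a e m)"
    using oocf_den_ge[of m] odd_oocf_num_den[of m] by simp_all
  show "coprime (oocf_num a e m) (oocf_den a e m)"
  proof (rule coprimeI)
    fix c
    assume c: "c dvd oocf_num a e m" "c dvd oocf_den a e m"
    define \<delta> where "\<delta> = oocf_mA a e m * oocf_mD a e m - oocf_mB a e m * oocf_mC a e m"
    have "oocf_num a e m * oocf_den a e (Suc m) - oocf_den a e m * oocf_num a e (Suc m) = 2 * \<delta>"
      unfolding oocf_num_Suc oocf_den_Suc \<delta>_def by (simp add: oocf_num_def oocf_den_def algebra_simps)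
    then have "c dvd 2 * \<delta>"
      using c by (metis dvd_diff dvd_mult2)
    moreover have "\<delta> * \<delta> = 1"
      using oocf_det[of m] unfolding \<delta>_def by auto
    ultimately have "c dvd 2"
      by (metis dvd_mult2 mult.assoc mult.right_neutral)
    moreover have "odd c"
      using c(2) odd_oocf_num_den[of m] dvd_trans by blast
    then have "coprime c 2"
      by simp
    ultimately show "is_unit c"
      by (metis coprime_common_divisor dvd_refl)
  qed
qed

end

section \<open>Best 1-rational approximations are OOCF convergents\<close>

lemma oocf_coefficient_bound:
  fixes \<sigma> \<rho> s s' :: int and w N :: real
  assumes parity: "odd (\<sigma> + \<rho>)" and range: "0 < \<sigma> * s + \<rho> * s'" "\<sigma> * s + \<rho> * s' < s'"
    and s: "1 \<le> s" "s \<le> s'" and w: "0 < w" and N: "N \<le> 0 \<or> (0 \<le> N \<and> N \<le> w)"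
  shows "w \<le> \<bar>\<sigma> * w + \<rho> * N\<bar>"
proof (cases "\<rho> = 0")
  case True
  then have "\<sigma> \<noteq> 0"
    using parity by auto
  then have "\<bar>\<sigma>\<bar> \<ge> 1"
    by linarith
  then have "w \<le> \<bar>\<sigma>\<bar> * w"
    using w by (simp add: mult_le_cancel_right1)
  then show ?thesis
    using True w by (simp add: abs_mult)
next
  case False
  have "\<sigma> \<noteq> 0"
  proof
    assume "\<sigma> = 0"
    then have "0 < \<rho> * s'" "\<rho> * s' < 1 * s'"
      using range by auto
    then show False
      using s by (simp add: zero_less_mult_iff)
  qed
  with False s range consider "\<sigma> > 0" "\<rho> < 0" | "\<sigma> < 0" "\<rho> > 0"
    using opposite_signs[of s s' \<sigma> \<rho>] by fastforce
  then show ?thesis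
  proof cases
    case 1
    have "(-\<rho>) * s \<le> (-\<rho>) * s'"
      using 1 s by (intro mult_left_mono) auto
    then have "(-\<rho>) * s < \<sigma> * s"
      using range(1) by (simp add: algebra_simps)
    then have "\<sigma> + \<rho> \<ge> 1"
      using s(1) by (smt (verit) mult_right_less_imp_less)
    then have "(\<sigma> + \<rho>) * w \<ge> 1 * w" "\<sigma> * w \<ge> 1 * w"
      using 1 w by (intro mult_right_mono; simp)+
    moreover have "\<rho> * N \<ge> 0 \<or> real_of_int \<rho> * N \<ge> \<rho> * w"
      using 1 N by (auto simp: mult_nonpos_nonpos intro: mult_left_mono_neg)
    ultimately show ?thesis
      by (auto simp: algebra_simps)
  next
    case 2
    have "(\<rho> - 1) * s' < (-\<sigma>) * s"
      using range(2) by (simp add: algebra_simps)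
    also have "\<dots> \<le> (-\<sigma>) * s'"
      using 2 s by (intro mult_left_mono) auto
    finally have "\<rho> - 1 < -\<sigma>"
      using s by (smt (verit) mult_right_less_imp_less)
    moreover have "\<rho> \<noteq> -\<sigma>"
      using parity by auto
    ultimately have "\<sigma> + \<rho> \<le> -1"
      by linarith
    then have "(\<sigma> + \<rho>) * w \<le> (-1) * w" "\<sigma> * w \<le> (-1) * w"
      using 2 w by (intro mult_right_mono; simp)+
    moreover have "\<rho> * N \<le> 0 \<or> real_of_int \<rho> * N \<le> \<rho> * w"
      using 2 N by (auto simp: mult_nonneg_nonpos intro: mult_left_mono)
    ultimately show ?thesis
      by (auto simp: algebra_simps)
  qed
qed

lemma oocf_B_factor_bounds:
  assumes "(\<alpha>, \<epsilon>) \<in> oocf_D" and "t \<in> oocf_B \<alpha> \<epsilon>"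
  defines "N \<equiv> of_int (2 * \<alpha> + \<epsilon> - 2) - of_int (2 * \<alpha> + \<epsilon>) * t"
  shows "N \<le> 0 \<or> (0 \<le> N \<and> N \<le> 1 - t)"
  using assms(1,2)
proof (cases rule: oocf_B_cases)
  case eps_minus
  define K where "K = real_of_int \<alpha>"
  have "K \<ge> 2"
    using eps_minus unfolding K_def by simp
  then have "(K - 1) * t \<ge> K - 2" "(2 * K - 1) * t \<le> 2 * K - 3"
    using eps_minus unfolding K_def[symmetric] by (simp_all add: field_simps)
  moreover have "N = (2 * K - 3) - (2 * K - 1) * t"
    unfolding N_def K_def using eps_minus by simp
  ultimately show ?thesis
    by (simp add: algebra_simps)
next
  case eps_plus
  define K where "K = real_of_int \<alpha>"
  have "K \<ge> 1"
    using eps_plus unfolding K_def by simp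
  then have "(2 * K + 1) * t \<ge> 2 * K - 1"
    using eps_plus unfolding K_def[symmetric] by (simp add: field_simps)
  moreover have "N = (2 * K - 1) - (2 * K + 1) * t"
    unfolding N_def K_def using eps_plus by simp
  ultimately show ?thesis
    by simp
qed

text \<open>The bound on \<open>b\<close> is the denominator of the next principal convergent
  (cf. \<open>oocf_den_Suc\<close>).  The pair \<open>(a, b)\<close> is written in the basis formed by the two consecutive
  convergents, which spans a sublattice of index 2.\<close>

lemma oocf_convergent_closer:
  fixes A B C D \<alpha> \<epsilon> a b :: int and t x :: real
  assumes CD: "C \<ge> 0" "D \<ge> 1" and det: "A * D - B * C = 1 \<or> A * D - B * C = -1"
    and x: "x = moebius A B C D t"
    and digit: "(\<alpha>, \<epsilon>) \<in> oocf_D" "t \<in> oocf_B \<alpha> \<epsilon>"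
    and odd: "odd a" "odd b" "odd (A + B)" "odd (C + D)"
    and b: "0 < b" "b < (2 * \<alpha> + \<epsilon> - 2) * C + (2 * \<alpha> + \<epsilon>) * D"
  shows "\<bar>of_int (C + D) * x - of_int (A + B)\<bar> \<le> \<bar>of_int b * x - of_int a\<bar>"
proof -
  define r s r' s' where "r = A + B" and "s = C + D"
    and "r' = (2 * \<alpha> + \<epsilon> - 2) * A + (2 * \<alpha> + \<epsilon>) * B"
    and "s' = (2 * \<alpha> + \<epsilon> - 2) * C + (2 * \<alpha> + \<epsilon>) * D"
  have \<alpha>\<epsilon>: "\<alpha> \<ge> 1" "\<epsilon> = 1 \<or> \<epsilon> = -1" "\<alpha> + \<epsilon> \<ge> 1"
    using oocf_D_bounds[OF digit(1)] by simp_all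
  then have "odd (2 * \<alpha> + \<epsilon>)"
    by auto
  then have "odd r'" "odd s'"
    using odd unfolding r'_def s'_def by simp_all
  moreover have "r * s' - s * r' = 2 \<or> r * s' - s * r' = -2"
    using det unfolding r_def s_def r'_def s'_def by (auto simp: algebra_simps)
  ultimately obtain \<sigma> \<rho> where ar: "a = \<sigma> * r + \<rho> * r'" and bs: "b = \<sigma> * s + \<rho> * s'"
    and "odd (\<sigma> + \<rho>)"
    using index_2_coords odd unfolding r_def s_def by metis
  have t: "0 \<le> t" "t < 1"
    using oocf_B_bounds[OF digit] by simp_all
  have "of_int C * t + of_int D > (0::real)"
    using CD t by (smt (verit) of_int_nonneg mult_nonneg_nonneg of_int_1_le_iff)
  then have "of_int C * t + of_int D \<noteq> (0::real)"
    by simp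
  define \<Delta> N where "\<Delta> = of_int C * x - of_int A"
    and "N = of_int (2 * \<alpha> + \<epsilon> - 2) - of_int (2 * \<alpha> + \<epsilon>) * t"
  have rs: "of_int s * x - of_int r = (1 - t) * \<Delta>"
    and rs': "of_int s' * x - of_int r' = N * \<Delta>"
    using moebius_remainders(1)[OF x \<open>_ \<noteq> 0\<close>] moebius_remainders(2)[OF x \<open>_ \<noteq> 0\<close>, of "2 * \<alpha> + \<epsilon>"]
    unfolding r_def s_def r'_def s'_def \<Delta>_def N_def by simp_all
  have "of_int b * x - of_int a = of_int \<sigma> * (of_int s * x - of_int r) + of_int \<rho> * (of_int s' * x - of_int r')"
    unfolding ar bs by (simp add: algebra_simps)
  also have "\<dots> = \<Delta> * (of_int \<sigma> * (1 - t) + of_int \<rho> * N)"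
    unfolding rs rs' by (simp add: algebra_simps)
  finally have ba: "\<bar>of_int b * x - of_int a\<bar> = \<bar>\<Delta>\<bar> * \<bar>of_int \<sigma> * (1 - t) + of_int \<rho> * N\<bar>"
    by (simp add: abs_mult)
  have "s \<le> s'"
  proof -
    have "s' - s = (2 * \<alpha> + \<epsilon> - 3) * C + (2 * \<alpha> + \<epsilon> - 1) * D"
      unfolding s_def s'_def by (simp add: algebra_simps)
    moreover have "2 * \<alpha> + \<epsilon> - 3 \<ge> 0" "2 * \<alpha> + \<epsilon> - 1 \<ge> 0"
      using \<alpha>\<epsilon> by auto
    ultimately show ?thesis
      using CD by (smt (verit) mult_nonneg_nonneg)
  qed
  have "1 - t \<le> \<bar>of_int \<sigma> * (1 - t) + of_int \<rho> * N\<bar>"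
    using oocf_coefficient_bound[OF \<open>odd (\<sigma> + \<rho>)\<close> _ _ _ \<open>s \<le> s'\<close>]
      oocf_B_factor_bounds[OF digit] b bs CD t unfolding s_def s'_def N_def by simp
  then have "\<bar>\<Delta>\<bar> * (1 - t) \<le> \<bar>of_int b * x - of_int a\<bar>"
    unfolding ba by (intro mult_left_mono) auto
  then show ?thesis
    using rs t unfolding r_def s_def by (simp add: abs_mult mult.commute)
qed

lemma best_1rat_approx_is_oocf_convergent:
  assumes best: "best_1rat_approx x p q" and not_one: "(p, q) \<noteq> (1, 1)"
    and expansion: "is_oocf_expansion x a e"
  shows "\<exists>m\<ge>1. real_of_int p / real_of_int q = oocf_conv a e m"
proof -
  interpret oocf_digits a e
    using expansion unfolding is_oocf_expansion_def by unfold_locales simp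
  have "q > 0" "odd p" "odd q"
    using best unfolding best_1rat_approx_def one_rational_def by simp_all
  then obtain m where below: "oocf_den a e m \<le> q" and above: "q < oocf_den a e (Suc m)"
    using oocf_den_bracket[of q] by auto
  have "\<bar>of_int (oocf_den a e m) * x - of_int (oocf_num a e m)\<bar> \<le> \<bar>of_int q * x - of_int p\<bar>"
    using oocf_convergent_closer[OF _ _ oocf_det oocf_expansion_moebius[OF expansion] digit_in_D_Suc
        oocf_expansion_Suc(2)[OF expansion]
        \<open>odd p\<close> \<open>odd q\<close> _ _ \<open>q > 0\<close> above[unfolded oocf_den_Suc]]
      oocf_mC_mD_pos[of m] odd_oocf_num_den[of m]
    unfolding oocf_num_def oocf_den_def by simp
  then have "(oocf_num a e m, oocf_den a e m) = (p, q)"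
    using best oocf_convergent_one_rational[of m] below unfolding best_1rat_approx_def by force
  moreover have "m \<noteq> 0"
  proof
    assume "m = 0"
    then have "(oocf_num a e m, oocf_den a e m) = (1, 1)"
      by (simp add: oocf_num_def oocf_den_def)
    with calculation not_one show False
      by simp
  qed
  ultimately show ?thesis
    using oocf_conv_eq[of m] by (intro exI[of _ m]) auto
qed

theorem mainTheorem12:
  fixes x :: real and b eta :: "nat \<Rightarrow> int" and n :: nat and p q :: int
  assumes "0 < x" and "x < 1" and "x \<notin> \<rat>"
    and "is_eicf_expansion (1 - x) b eta"
    and "n \<ge> 1"
    and "eicf_pq b eta n = (p, q)"
    and "odd (q - p)" and "odd q"
  shows "best_1rat_approx x (q - p) q \<and>
         (\<forall>a e. is_oocf_expansion x a e \<longrightarrow>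
            (\<exists>m\<ge>1. real_of_int (q - p) / real_of_int q = oocf_conv a e m))"
proof -
  have best: "best_1rat_approx x (q - p) q" and "q \<ge> 2"
    using eicf_convergent_best_1rat_approx[OF assms(3-8)] by simp_all
  then have "(q - p, q) \<noteq> (1, 1)"
    by simp
  then show ?thesis
    using best best_1rat_approx_is_oocf_convergent by blast
qed

end
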